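(* Let $\mathbb{V}$ be a BIT speciale variety, $A$ a $\mathbb{V}$-algebra and $H\subseteq A$ a subset such that $0\in H$, $\theta(h_1,\dots,h_{n+1})\in H$ for all $h_1,\dots,h_{n+1}\in H$, and $\alpha_i(h,0)\in H$ for all $h\in H$ and all $1\le i\le n$. Then $\theta(H,\dots,H,0)=H$.
   Context: BIT speciale: the algebraic theory of $\mathbb{V}$ contains a constant $0$ and, for some $n\ge1$, binary terms $\alpha_1,\dots,\alpha_n$ and an $(n+1)$-ary term $\theta$ such that $\alpha_i(x,x)=0$ ($1\le i\le n$) and $\theta(\alpha_1(x,y),\dots,\alpha_n(x,y),y)=x$ are identities of $\mathbb{V}$. Notation: $\theta(H,\dots,H,a)=\{\theta(h_1,\dots,h_n,a)\mid h_1,\dots,h_n\in H\}$. *)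

theory Defs
  imports Main
begin

text \<open>A V-algebra of a BIT speciale variety, seen through the interpretations in A
of the constant 0, the binary terms alpha_1..alpha_n and the (n+1)-ary term theta.
Since A lies in V, the defining identities of V hold in A.\<close>

definition bit_speciale_alg ::
  "'a set \<Rightarrow> 'a \<Rightarrow> nat \<Rightarrow> (nat \<Rightarrow> 'a \<Rightarrow> 'a \<Rightarrow> 'a) \<Rightarrow> ('a list \<Rightarrow> 'a \<Rightarrow> 'a) \<Rightarrow> bool" where
  "bit_speciale_alg A zero n alpha theta \<longleftrightarrow>
     n \<ge> 1 \<and> zero \<in> A \<and>
     (\<forall>i\<in>{1..n}. \<forall>x\<in>A. \<forall>y\<in>A. alpha i x y \<in> A) \<and>
     (\<forall>xs y. length xs = n \<and> set xs \<subseteq> A \<and> y \<in> A \<longrightarrow> theta xs y \<in> A) \<and>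
     (\<forall>i\<in>{1..n}. \<forall>x\<in>A. alpha i x x = zero) \<and>
     (\<forall>x\<in>A. \<forall>y\<in>A. theta (map (\<lambda>i. alpha i x y) [1..<Suc n]) y = x)"

end

theory Submission
  imports Defs
begin

lemma bit_speciale_alg_theta_alpha:
  assumes "bit_speciale_alg A zero n alpha theta" and "x \<in> A" and "y \<in> A"
  shows "theta (map (\<lambda>i. alpha i x y) [1..<Suc n]) y = x"
  using assms unfolding bit_speciale_alg_def by blast

theorem lemma2p3:
  fixes A H :: "'a set" and zero :: 'a and n :: nat
    and alpha :: "nat \<Rightarrow> 'a \<Rightarrow> 'a \<Rightarrow> 'a" and theta :: "'a list \<Rightarrow> 'a \<Rightarrow> 'a"
  assumes alg: "bit_speciale_alg A zero n alpha theta"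
    and HA: "H \<subseteq> A"
    and H0: "zero \<in> H"
    and Htheta: "\<And>hs h. length hs = n \<Longrightarrow> set hs \<subseteq> H \<Longrightarrow> h \<in> H \<Longrightarrow> theta hs h \<in> H"
    and Halpha: "\<And>h i. h \<in> H \<Longrightarrow> i \<in> {1..n} \<Longrightarrow> alpha i h zero \<in> H"
  shows "{theta hs zero | hs. length hs = n \<and> set hs \<subseteq> H} = H"
proof
  show "{theta hs zero | hs. length hs = n \<and> set hs \<subseteq> H} \<subseteq> H"
    using Htheta H0 by blast
next
  show "H \<subseteq> {theta hs zero | hs. length hs = n \<and> set hs \<subseteq> H}"
  proof
    fix h assume h: "h \<in> H"
    define hs where "hs = map (\<lambda>i. alpha i h zero) [1..<Suc n]"
    have "length hs = n" and "set hs \<subseteq> H"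
      using Halpha h by (auto simp: hs_def)
    moreover have "theta hs zero = h"
      unfolding hs_def using bit_speciale_alg_theta_alpha[OF alg] h H0 HA by blast
    ultimately show "h \<in> {theta hs zero | hs. length hs = n \<and> set hs \<subseteq> H}"
      by blast
  qed
qed

end
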